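(* Let $(X,\rho)$ be a symmetric quandle, $Y$ an $(X,\rho)$-set, $A$ an abelian group, and $\theta$ a $2$-cocycle of $C^*_{\rm Q}(X,A)_Y$. If $\theta$ is cohomologous in $C^*_{\rm Q}(X,A)_Y$ to a $2$-cocycle satisfying the symmetric quandle $2$-cocycle conditions, then the invariant $\Phi^{\rm ori}_\theta$ does not depend on the orientation of a link: for any link diagram $D$ and any two orientations $D^+$, $D^{+\prime}$ of $D$, $\Phi^{\rm ori}_\theta(D^+)=\Phi^{\rm ori}_\theta(D^{+\prime})$.
   Context: A quandle is a set $X$ with a binary operation $(x,y)\mapsto x^y$ such that $x^x=x$; for all $x,y$ there is a unique $z$ with $z^y=x$ (written $x^{y^{-1}}$); and $(x^y)^z=(x^z)^{(y^z)}$. A good involution is a map $\rho:X\to X$ with $\rho\circ\rho={\rm id}$, $\rho(x^y)=\rho(x)^y$, $x^{\rho(y)}=x^{y^{-1}}$; $(X,\rho)$ is a symmetric quandle. The associated group $G_{(X,\rho)}$ has generators $X$ and relations $x^y=y^{-1}xy$, $\rho(x)=x^{-1}$. An $(X,\rho)$-set is a set $Y$ with a right action of $G_{(X,\rho)}$; write $y^x$ for the action of $x\in X$ on $y\in Y$. For $n\ge1$ let $C_n(X)_Y$ be free abelian on $Y\times X^n$ ($C_0$ free abelian on $Y$, zero in negative degrees) with $\partial_n(y,x_1,\dots,x_n)=\sum_{i=1}^n(-1)^i\{(y,x_1,\dots,\widehat{x_i},\dots,x_n)-(y^{x_i},x_1^{x_i},\dots,x_{i-1}^{x_i},\widehat{x_i},x_{i+1},\dots,x_n)\}$.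 Let $D^{\rm Q}_n$ be generated by tuples with $x_i=x_{i+1}$ for some $i$; $C^{\rm Q}_*(X)_Y=C_*(X)_Y/D^{\rm Q}_*$ and $C^*_{\rm Q}(X,A)_Y={\rm Hom}(C^{\rm Q}_*(X)_Y,A)$. A map $\theta:Y\times X^2\to A$ (extended linearly) satisfies the symmetric quandle $2$-cocycle conditions if (1) for all $(y,x_1,x_2,x_3)$: $-\theta(y,x_2,x_3)+\theta(y^{x_1},x_2,x_3)+\theta(y,x_1,x_3)-\theta(y^{x_2},x_1^{x_2},x_3)-\theta(y,x_1,x_2)+\theta(y^{x_3},x_1^{x_3},x_2^{x_3})=0$; (2) $\theta(y,x,x)=0$ for all $(y,x)$; (3) $\theta(y,x_1,x_2)+\theta(y^{x_1},\rho(x_1),x_2)=0$ and $\theta(y,x_1,x_2)+\theta(y^{x_2},x_1^{x_2},\rho(x_2))=0$ for all $(y,x_1,x_2)$. Such a $\theta$ is in particular a $2$-cocycle of $C^*_{\rm Q}(X,A)_Y$. For an oriented link diagram $D^+\subset\mathbb{R}^2$: semi-arcs are the arcs obtained by cutting the over-arcs at crossings; each semi-arc gets the normal orientation with (orientation vector, normal vector) a positive basis. An $X_Y$-coloring assigns an element of $X$ to each semi-arc and of $Y$ to each complementary region so that at each crossing the two over semi-arcs have the same label, the under semi-arcs labeled $x_1,x_2$ with the over normal pointing from the $x_1$-side to the $x_2$-side and over label $x_3$ satisfy $x_1^{x_3}=x_2$, and a semi-arc labeled $x$ whose normal points from a region labeled $y_1$ to one labeled $y_2$ satisfies $y_1^x=y_2$.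 The weight of a crossing $v$ is $\epsilon(y,x_1,x_2)$ where $y$ is the label of the region from which the normals of the under semi-arc (label $x_1$) and over semi-arc (label $x_2$) facing it both point away, and $\epsilon=+1$ if (over normal, under normal) is a positive basis of $\mathbb{R}^2$ and $-1$ otherwise. $c_{D^+,C}$ is the sum of weights over all crossings, and $\Phi^{\rm ori}_\theta(D^+)=\{\theta(c_{D^+,C})\mid C\text{ an }X_Y\text{-coloring of }D^+\}$ as a multi-set. *)

theory Defs
  imports Main "HOL-Library.FuncSet" "HOL-Library.Equipollence"
begin

text \<open>The quandle X is the whole type 'x, with operation q x y = x^y.\<close>

definition quandle :: "('x \<Rightarrow> 'x \<Rightarrow> 'x) \<Rightarrow> bool" where
  "quandle q \<longleftrightarrow>
     (\<forall>x. q x x = x) \<and>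
     (\<forall>x y. \<exists>!z. q z y = x) \<and>
     (\<forall>x y z. q (q x y) z = q (q x z) (q y z))"

text \<open>x^(y^-1) is the unique z with z^y = x.\<close>
definition qinv :: "('x \<Rightarrow> 'x \<Rightarrow> 'x) \<Rightarrow> 'x \<Rightarrow> 'x \<Rightarrow> 'x" where
  "qinv q x y = (THE z. q z y = x)"

definition good_involution :: "('x \<Rightarrow> 'x \<Rightarrow> 'x) \<Rightarrow> ('x \<Rightarrow> 'x) \<Rightarrow> bool" where
  "good_involution q \<rho> \<longleftrightarrow>
     (\<forall>x. \<rho> (\<rho> x) = x) \<and>
     (\<forall>x y. \<rho> (q x y) = q (\<rho> x) y) \<and>
     (\<forall>x y. q x (\<rho> y) = qinv q x y)"

definition symmetric_quandle :: "('x \<Rightarrow> 'x \<Rightarrow> 'x) \<Rightarrow> ('x \<Rightarrow> 'x) \<Rightarrow> bool" where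
  "symmetric_quandle q \<rho> \<longleftrightarrow> quandle q \<and> good_involution q \<rho>"

text \<open>An (X,rho)-set: a right action of the associated group G_(X,rho) on the type 'y,
  given by the actions act y x = y^x of the generators x; these must be bijections
  satisfying the defining relations x^z = z^-1 x z and rho(x) = x^-1 of the group.\<close>
definition xrho_set :: "('x \<Rightarrow> 'x \<Rightarrow> 'x) \<Rightarrow> ('x \<Rightarrow> 'x) \<Rightarrow> ('y \<Rightarrow> 'x \<Rightarrow> 'y) \<Rightarrow> bool" where
  "xrho_set q \<rho> act \<longleftrightarrow>
     (\<forall>x. bij (\<lambda>y. act y x)) \<and>
     (\<forall>y x z. act (act y z) (q x z) = act (act y x) z) \<and>
     (\<forall>y x. act (act y x) (\<rho> x) = y)"

text \<open>1-cochains of C^*_Q are arbitrary maps f : Y x X -> A; their coboundary is f composed with boundary_2.\<close>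
definition delta1 :: "('x \<Rightarrow> 'x \<Rightarrow> 'x) \<Rightarrow> ('y \<Rightarrow> 'x \<Rightarrow> 'y) \<Rightarrow> ('y \<Rightarrow> 'x \<Rightarrow> 'a::ab_group_add)
                      \<Rightarrow> 'y \<Rightarrow> 'x \<Rightarrow> 'x \<Rightarrow> 'a" where
  "delta1 q act f y x1 x2 =
     - (f y x2 - f (act y x1) x2) + (f y x1 - f (act y x2) (q x1 x2))"

text \<open>theta composed with boundary_3 evaluated at (y,x1,x2,x3).\<close>
definition delta2 :: "('x \<Rightarrow> 'x \<Rightarrow> 'x) \<Rightarrow> ('y \<Rightarrow> 'x \<Rightarrow> 'y) \<Rightarrow> ('y \<Rightarrow> 'x \<Rightarrow> 'x \<Rightarrow> 'a::ab_group_add)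
                      \<Rightarrow> 'y \<Rightarrow> 'x \<Rightarrow> 'x \<Rightarrow> 'x \<Rightarrow> 'a" where
  "delta2 q act \<theta> y x1 x2 x3 =
     - \<theta> y x2 x3 + \<theta> (act y x1) x2 x3 + \<theta> y x1 x3 - \<theta> (act y x2) (q x1 x2) x3
     - \<theta> y x1 x2 + \<theta> (act y x3) (q x1 x3) (q x2 x3)"

text \<open>2-cocycle of C^*_Q(X,A)_Y: a map on Y x X^2 vanishing on degenerate tuples
  (i.e. a cochain of the quotient complex) with vanishing coboundary.\<close>
definition Q_2cocycle :: "('x \<Rightarrow> 'x \<Rightarrow> 'x) \<Rightarrow> ('y \<Rightarrow> 'x \<Rightarrow> 'y) \<Rightarrow> ('y \<Rightarrow> 'x \<Rightarrow> 'x \<Rightarrow> 'a::ab_group_add) \<Rightarrow> bool" where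
  "Q_2cocycle q act \<theta> \<longleftrightarrow>
     (\<forall>y x. \<theta> y x x = 0) \<and> (\<forall>y x1 x2 x3. delta2 q act \<theta> y x1 x2 x3 = 0)"

definition Q_cohomologous :: "('x \<Rightarrow> 'x \<Rightarrow> 'x) \<Rightarrow> ('y \<Rightarrow> 'x \<Rightarrow> 'y)
      \<Rightarrow> ('y \<Rightarrow> 'x \<Rightarrow> 'x \<Rightarrow> 'a::ab_group_add) \<Rightarrow> ('y \<Rightarrow> 'x \<Rightarrow> 'x \<Rightarrow> 'a) \<Rightarrow> bool" where
  "Q_cohomologous q act \<theta> \<theta>' \<longleftrightarrow>
     (\<exists>f. \<forall>y x1 x2. \<theta> y x1 x2 - \<theta>' y x1 x2 = delta1 q act f y x1 x2)"

definition sym_2cocycle :: "('x \<Rightarrow> 'x \<Rightarrow> 'x) \<Rightarrow> ('x \<Rightarrow> 'x) \<Rightarrow> ('y \<Rightarrow> 'x \<Rightarrow> 'y)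
      \<Rightarrow> ('y \<Rightarrow> 'x \<Rightarrow> 'x \<Rightarrow> 'a::ab_group_add) \<Rightarrow> bool" where
  "sym_2cocycle q \<rho> act \<theta> \<longleftrightarrow>
     (\<forall>y x1 x2 x3. delta2 q act \<theta> y x1 x2 x3 = 0) \<and>
     (\<forall>y x. \<theta> y x x = 0) \<and>
     (\<forall>y x1 x2. \<theta> y x1 x2 + \<theta> (act y x1) (\<rho> x1) x2 = 0) \<and>
     (\<forall>y x1 x2. \<theta> y x1 x2 + \<theta> (act y x2) (q x1 x2) (\<rho> x2) = 0)"

text \<open>An (unoriented) link diagram is described combinatorially:
  arcs = semi-arcs (edges of the projection, including crossingless circles),
  regs = complementary regions, crs = crossings.
  Each semi-arc carries an arbitrary reference direction; lreg s / rreg s are the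
  regions on its left / right with respect to this reference direction.
  At a crossing c, pos c i (i = 0,1,2,3, in counterclockwise order around c) is the
  semi-arc end at position i: (s, False) = the reference-start of s, (s, True) = its
  reference-end.  Positions 0,2 form the under strand, positions 1,3 the over strand.\<close>
record ('s, 'r, 'c) udiagram =
  arcs :: "'s set"
  regs :: "'r set"
  crs :: "'c set"
  lreg :: "'s \<Rightarrow> 'r"
  rreg :: "'s \<Rightarrow> 'r"
  pos :: "'c \<Rightarrow> nat \<Rightarrow> 's \<times> bool"

text \<open>Region on the counterclockwise / clockwise side of the ray from the crossing
  along the semi-arc end e.\<close>
definition ccw_reg :: "('s, 'r, 'c) udiagram \<Rightarrow> 's \<times> bool \<Rightarrow> 'r" where
  "ccw_reg D e = (if snd e then rreg D (fst e) else lreg D (fst e))"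

definition cw_reg :: "('s, 'r, 'c) udiagram \<Rightarrow> 's \<times> bool \<Rightarrow> 'r" where
  "cw_reg D e = (if snd e then lreg D (fst e) else rreg D (fst e))"

definition ends :: "('s, 'r, 'c) udiagram \<Rightarrow> ('s \<times> bool) set" where
  "ends D = (\<lambda>(c, i). pos D c i) ` (crs D \<times> {..<4})"

definition wf_diagram :: "('s, 'r, 'c) udiagram \<Rightarrow> bool" where
  "wf_diagram D \<longleftrightarrow>
     finite (arcs D) \<and> finite (regs D) \<and> finite (crs D) \<and>
     (\<forall>s\<in>arcs D. lreg D s \<in> regs D \<and> rreg D s \<in> regs D) \<and>
     (\<forall>c\<in>crs D. \<forall>i<4. fst (pos D c i) \<in> arcs D) \<and>
     inj_on (\<lambda>(c, i). pos D c i) (crs D \<times> {..<4}) \<and>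
     (\<forall>s\<in>arcs D. ((s, False) \<in> ends D) = ((s, True) \<in> ends D)) \<and>
     (\<forall>c\<in>crs D. \<forall>i<4. ccw_reg D (pos D c i) = cw_reg D (pos D c (Suc i mod 4))) \<and>
     (arcs D \<noteq> {} \<longrightarrow> regs D = lreg D ` arcs D \<union> rreg D ` arcs D) \<and>
     (arcs D = {} \<longrightarrow> card (regs D) = 1)"

text \<open>An orientation assigns to each semi-arc whether its direction agrees (True) with
  the reference direction; it must be coherent along both strands at every crossing.\<close>
definition incoming :: "('s \<Rightarrow> bool) \<Rightarrow> 's \<times> bool \<Rightarrow> bool" where
  "incoming ori e \<longleftrightarrow> (snd e = ori (fst e))"

definition is_orientation :: "('s, 'r, 'c) udiagram \<Rightarrow> ('s \<Rightarrow> bool) \<Rightarrow> bool" where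
  "is_orientation D ori \<longleftrightarrow>
     (\<forall>c\<in>crs D. \<forall>i<2. incoming ori (pos D c i) \<noteq> incoming ori (pos D c (i + 2)))"

definition oleft :: "('s, 'r, 'c) udiagram \<Rightarrow> ('s \<Rightarrow> bool) \<Rightarrow> 's \<Rightarrow> 'r" where
  "oleft D ori s = (if ori s then lreg D s else rreg D s)"

definition oright :: "('s, 'r, 'c) udiagram \<Rightarrow> ('s \<Rightarrow> bool) \<Rightarrow> 's \<Rightarrow> 'r" where
  "oright D ori s = (if ori s then rreg D s else lreg D s)"

text \<open>Positions at crossing c (w.r.t. orientation ori): the outgoing over position,
  the under position on the right side of the over strand (its semi-arc carries x1),
  and the under position on its left side (carrying x2).\<close>
definition over_out :: "('s, 'r, 'c) udiagram \<Rightarrow> ('s \<Rightarrow> bool) \<Rightarrow> 'c \<Rightarrow> nat" where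
  "over_out D ori c = (if incoming ori (pos D c 1) then 3 else 1)"

definition under_right :: "('s, 'r, 'c) udiagram \<Rightarrow> ('s \<Rightarrow> bool) \<Rightarrow> 'c \<Rightarrow> nat" where
  "under_right D ori c = (over_out D ori c + 3) mod 4"

definition under_left :: "('s, 'r, 'c) udiagram \<Rightarrow> ('s \<Rightarrow> bool) \<Rightarrow> 'c \<Rightarrow> nat" where
  "under_left D ori c = (over_out D ori c + 1) mod 4"

text \<open>Sign epsilon of crossing c: +1 (True) iff (over normal, under normal) is a
  positive basis, i.e. iff the under strand passes from the right to the left of the
  over strand.\<close>
definition cr_sign :: "('s, 'r, 'c) udiagram \<Rightarrow> ('s \<Rightarrow> bool) \<Rightarrow> 'c \<Rightarrow> bool" where
  "cr_sign D ori c \<longleftrightarrow> incoming ori (pos D c (under_right D ori c))"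

text \<open>X_Y-colorings of the oriented diagram (D, ori): labels of semi-arcs and regions,
  extensional outside the diagram.  The normal of a semi-arc points to its left.\<close>
definition coloring :: "('x \<Rightarrow> 'x \<Rightarrow> 'x) \<Rightarrow> ('y \<Rightarrow> 'x \<Rightarrow> 'y) \<Rightarrow> ('s, 'r, 'c) udiagram
      \<Rightarrow> ('s \<Rightarrow> bool) \<Rightarrow> ('s \<Rightarrow> 'x) \<times> ('r \<Rightarrow> 'y) \<Rightarrow> bool" where
  "coloring q act D ori C \<longleftrightarrow>
     (let xs = fst C; yr = snd C in
       xs \<in> extensional (arcs D) \<and> yr \<in> extensional (regs D) \<and>
       (\<forall>s\<in>arcs D. act (yr (oright D ori s)) (xs s) = yr (oleft D ori s)) \<and>
       (\<forall>c\<in>crs D.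
          xs (fst (pos D c 1)) = xs (fst (pos D c 3)) \<and>
          q (xs (fst (pos D c (under_right D ori c)))) (xs (fst (pos D c 1)))
            = xs (fst (pos D c (under_left D ori c)))))"

text \<open>theta(c_{D,C}) = sum over crossings of epsilon * theta(y, x1, x2), where y is the
  region to the right of both strands (= right region of the under semi-arc on the right
  side of the over strand), x1 its label and x2 the over label.\<close>
definition theta_val :: "('y \<Rightarrow> 'x \<Rightarrow> 'x \<Rightarrow> 'a::ab_group_add) \<Rightarrow> ('s, 'r, 'c) udiagram
      \<Rightarrow> ('s \<Rightarrow> bool) \<Rightarrow> ('s \<Rightarrow> 'x) \<times> ('r \<Rightarrow> 'y) \<Rightarrow> 'a" where
  "theta_val \<theta> D ori C =
     (\<Sum>c\<in>crs D.
        (let s1 = fst (pos D c (under_right D ori c));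
             v = \<theta> (snd C (oright D ori s1)) (fst C s1) (fst C (fst (pos D c 1)))
         in if cr_sign D ori c then v else - v))"

text \<open>The multiset Phi^ori_theta(D,ori), represented by its fibres: Phi_fibre ... a is the
  set of colorings C with theta(c_{D,C}) = a, whose cardinality is the multiplicity of a.\<close>
definition Phi_fibre :: "('x \<Rightarrow> 'x \<Rightarrow> 'x) \<Rightarrow> ('y \<Rightarrow> 'x \<Rightarrow> 'y) \<Rightarrow> ('y \<Rightarrow> 'x \<Rightarrow> 'x \<Rightarrow> 'a::ab_group_add)
      \<Rightarrow> ('s, 'r, 'c) udiagram \<Rightarrow> ('s \<Rightarrow> bool) \<Rightarrow> 'a \<Rightarrow> (('s \<Rightarrow> 'x) \<times> ('r \<Rightarrow> 'y)) set" where
  "Phi_fibre q act \<theta> D ori a = {C. coloring q act D ori C \<and> theta_val \<theta> D ori C = a}"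

definition Phi_eq :: "('x \<Rightarrow> 'x \<Rightarrow> 'x) \<Rightarrow> ('y \<Rightarrow> 'x \<Rightarrow> 'y) \<Rightarrow> ('y \<Rightarrow> 'x \<Rightarrow> 'x \<Rightarrow> 'a::ab_group_add)
      \<Rightarrow> ('s, 'r, 'c) udiagram \<Rightarrow> ('s \<Rightarrow> bool) \<Rightarrow> ('s \<Rightarrow> bool) \<Rightarrow> bool" where
  "Phi_eq q act \<theta> D o1 o2 \<longleftrightarrow>
     (\<forall>a. Phi_fibre q act \<theta> D o1 a \<approx> Phi_fibre q act \<theta> D o2 a)"

end

theory Submission
  imports Defs
begin

text \<open>If \<open>\<theta> - \<theta>' = \<delta>f\<close>, the contribution of \<open>\<delta>f\<close> to the weight of a crossing is a signed
  sum of values of \<open>f\<close> at the four semi-arc ends meeting there. Every semi-arc has two ends,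
  entering with opposite signs, so summed over all crossings these cancel and \<open>\<theta>\<close>, \<open>\<theta>'\<close> give
  the same value on every coloring. For a symmetric cocycle \<open>\<theta>'\<close>, reversing the semi-arcs on
  which two orientations differ and replacing their labels \<open>x\<close> by \<open>\<rho> x\<close> turns colorings of
  one orientation into colorings of the other without changing any crossing weight. This map
  is an involution, hence a bijection between the fibres of \<open>\<Phi>\<close>.\<close>

lemma quandle_qinv_cancel: "quandle q \<Longrightarrow> qinv q (q x y) y = x"
  unfolding quandle_def qinv_def by (metis (mono_tags, lifting) the_equality)

lemma symmetric_quandleD:
  assumes "symmetric_quandle q \<rho>"
  shows "\<rho> (\<rho> x) = x" and "\<rho> (q x y) = q (\<rho> x) y" and "q (q x y) (\<rho> y) = x"
  using assms quandle_qinv_cancel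
  unfolding symmetric_quandle_def good_involution_def by auto

lemma xrho_setD:
  assumes "xrho_set q \<rho> act"
  shows "act (act y z) (q x z) = act (act y x) z" and "act (act y x) (\<rho> x) = y"
  using assms unfolding xrho_set_def by auto

lemma sym_2cocycle_rho:
  assumes "sym_2cocycle q \<rho> act \<theta>"
  shows "\<theta> (act y u) (\<rho> u) v = - \<theta> y u v" and "\<theta> (act y v) (q u v) (\<rho> v) = - \<theta> y u v"
  using assms unfolding sym_2cocycle_def by (metis add_eq_0_iff)+

section \<open>The local picture at a crossing\<close>

text \<open>Ends \<open>0, \<dots>, 3\<close> of a crossing are numbered counterclockwise, \<open>0, 2\<close> under and \<open>1, 3\<close> over;
  \<open>b i\<close> says whether the semi-arc at end \<open>i\<close> points into the crossing, \<open>x i\<close> is its label and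
  \<open>r i\<close> labels the region between ends \<open>i\<close> and \<open>i + 1 mod 4\<close>.\<close>

definition signed :: "bool \<Rightarrow> 'a::uminus \<Rightarrow> 'a" where
  "signed b v = (if b then v else - v)"

definition right_region :: "(nat \<Rightarrow> bool) \<Rightarrow> (nat \<Rightarrow> 'y) \<Rightarrow> nat \<Rightarrow> 'y" where
  "right_region b r i = (if b i then r i else r ((i + 3) mod 4))"

definition left_region :: "(nat \<Rightarrow> bool) \<Rightarrow> (nat \<Rightarrow> 'y) \<Rightarrow> nat \<Rightarrow> 'y" where
  "left_region b r i = (if b i then r ((i + 3) mod 4) else r i)"

definition local_orientation :: "(nat \<Rightarrow> bool) \<Rightarrow> bool" where
  "local_orientation b \<longleftrightarrow> b 0 \<noteq> b 2 \<and> b 1 \<noteq> b 3"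

text \<open>The equations below are oriented so that the simplifier eliminates dependent labels; for a
  coherently oriented crossing this rewriting is acyclic.\<close>

definition local_crossing_rel :: "('x \<Rightarrow> 'x \<Rightarrow> 'x) \<Rightarrow> (nat \<Rightarrow> bool) \<Rightarrow> (nat \<Rightarrow> 'x) \<Rightarrow> bool" where
  "local_crossing_rel q b x \<longleftrightarrow>
     x 3 = x 1 \<and> (if b 1 then x 0 = q (x 2) (x 1) else x 2 = q (x 0) (x 1))"

definition local_region_rel :: "('y \<Rightarrow> 'x \<Rightarrow> 'y) \<Rightarrow> (nat \<Rightarrow> bool) \<Rightarrow> (nat \<Rightarrow> 'y) \<Rightarrow> (nat \<Rightarrow> 'x) \<Rightarrow> bool" where
  "local_region_rel act b r x \<longleftrightarrow> (\<forall>i<4. left_region b r i = act (right_region b r i) (x i))"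

text \<open>The under semi-arc on the right of the over strand is at end 2 if the over strand enters
  at end 1, and at end 0 otherwise.\<close>

definition local_weight :: "('y \<Rightarrow> 'x \<Rightarrow> 'x \<Rightarrow> 'a::ab_group_add) \<Rightarrow> (nat \<Rightarrow> bool) \<Rightarrow> (nat \<Rightarrow> 'y) \<Rightarrow> (nat \<Rightarrow> 'x) \<Rightarrow> 'a" where
  "local_weight \<theta> b r x =
     (if b 1 then signed (b 2) (\<theta> (right_region b r 2) (x 2) (x 1))
      else signed (b 0) (\<theta> (right_region b r 0) (x 0) (x 1)))"

lemma all_less_four: "(\<forall>i<(4::nat). P i) \<longleftrightarrow> P 0 \<and> P 1 \<and> P 2 \<and> P 3"
  by (auto simp: numeral_eq_Suc less_Suc_eq)

lemma sum_lessThan_four: "(\<Sum>i<(4::nat). g i) = g 0 + g 1 + g 2 + (g 3 :: 'a::comm_monoid_add)"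
  by (simp add: eval_nat_numeral)

lemma right_region_simps:
  "right_region b r 0 = (if b 0 then r 0 else r 3)" "right_region b r 1 = (if b 1 then r 1 else r 0)"
  "right_region b r 2 = (if b 2 then r 2 else r 1)" "right_region b r 3 = (if b 3 then r 3 else r 2)"
  by (simp_all add: right_region_def)

lemma left_region_simps:
  "left_region b r 0 = (if b 0 then r 3 else r 0)" "left_region b r 1 = (if b 1 then r 0 else r 1)"
  "left_region b r 2 = (if b 2 then r 1 else r 2)" "left_region b r 3 = (if b 3 then r 2 else r 3)"
  by (simp_all add: left_region_def)

lemma local_region_rel_iff:
  "local_region_rel act b r x \<longleftrightarrow>
     left_region b r 0 = act (right_region b r 0) (x 0) \<and> left_region b r 1 = act (right_region b r 1) (x 1) \<and>
     left_region b r 2 = act (right_region b r 2) (x 2) \<and> left_region b r 3 = act (right_region b r 3) (x 3)"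
  unfolding local_region_rel_def all_less_four ..

lemma local_orientation_iff: "local_orientation b \<longleftrightarrow> b 2 = (\<not> b 0) \<and> b 3 = (\<not> b 1)"
  unfolding local_orientation_def by auto

lemma local_weight_delta1:
  assumes "local_orientation b" "local_crossing_rel q b x" "local_region_rel act b r x"
  shows "local_weight (delta1 q act f) b r x = (\<Sum>i<4. signed (b i) (f (right_region b r i) (x i)))"
  using assms unfolding local_orientation_iff local_crossing_rel_def local_region_rel_iff
  by (cases "b 0"; cases "b 1")
     (auto simp: sum_lessThan_four local_weight_def signed_def right_region_simps left_region_simps
        delta1_def algebra_simps simp del: One_nat_def)

text \<open>Only the four ends of a crossing are constrained: the diagram data at positions above 3
  are arbitrary.\<close>

definition flipped_ends :: "('x \<Rightarrow> 'x) \<Rightarrow> (nat \<Rightarrow> bool) \<Rightarrow> (nat \<Rightarrow> bool) \<Rightarrow> (nat \<Rightarrow> 'x)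
      \<Rightarrow> (nat \<Rightarrow> bool) \<Rightarrow> (nat \<Rightarrow> 'x) \<Rightarrow> bool" where
  "flipped_ends \<rho> fl b x b' x' \<longleftrightarrow>
     (\<forall>i<4. b' i = (b i \<noteq> fl i) \<and> x' i = (if fl i then \<rho> (x i) else x i))"

lemma local_crossing_rel_flip:
  assumes "symmetric_quandle q \<rho>" "local_crossing_rel q b x" "flipped_ends \<rho> fl b x b' x'"
    and "fl 0 = fl 2" "fl 1 = fl 3"
  shows "local_crossing_rel q b' x'"
  using assms(2-) unfolding local_crossing_rel_def flipped_ends_def all_less_four
  by (cases "b 1"; cases "fl 0"; cases "fl 1") (auto simp: symmetric_quandleD[OF assms(1)] simp del: One_nat_def)

lemma local_region_rel_flip:
  assumes "xrho_set q \<rho> act" "local_region_rel act b r x" "flipped_ends \<rho> fl b x b' x'"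
  shows "local_region_rel act b' r x'"
  unfolding local_region_rel_def
proof (intro allI impI)
  fix i :: nat assume "i < 4"
  then have "left_region b r i = act (right_region b r i) (x i)"
    and "b' i = (b i \<noteq> fl i)" and "x' i = (if fl i then \<rho> (x i) else x i)"
    using assms(2,3) unfolding local_region_rel_def flipped_ends_def by blast+
  then show "left_region b' r i = act (right_region b' r i) (x' i)"
    using xrho_setD(2)[OF assms(1)] by (auto simp: right_region_def left_region_def)
qed

lemma local_weight_flip:
  assumes "symmetric_quandle q \<rho>" "xrho_set q \<rho> act" "sym_2cocycle q \<rho> act \<theta>"
    and "local_orientation b" "local_crossing_rel q b x" "local_region_rel act b r x"
    and "flipped_ends \<rho> fl b x b' x'" "fl 0 = fl 2" "fl 1 = fl 3"
  shows "local_weight \<theta> b' r x' = local_weight \<theta> b r x"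
  using assms(4-)
  unfolding local_orientation_iff local_crossing_rel_def local_region_rel_iff flipped_ends_def all_less_four
  by (cases "b 0"; cases "b 1"; cases "fl 0"; cases "fl 1")
     (auto simp: local_weight_def signed_def right_region_simps left_region_simps symmetric_quandleD[OF assms(1)]
        xrho_setD[OF assms(2)] sym_2cocycle_rho[OF assms(3)] simp del: One_nat_def)

definition end_dirs :: "('s, 'r, 'c) udiagram \<Rightarrow> ('s \<Rightarrow> bool) \<Rightarrow> 'c \<Rightarrow> nat \<Rightarrow> bool" where
  "end_dirs D ori c i = incoming ori (pos D c i)"

definition end_labels :: "('s, 'r, 'c) udiagram \<Rightarrow> ('s \<Rightarrow> 'x) \<times> ('r \<Rightarrow> 'y) \<Rightarrow> 'c \<Rightarrow> nat \<Rightarrow> 'x" where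
  "end_labels D C c i = fst C (fst (pos D c i))"

definition corner_labels :: "('s, 'r, 'c) udiagram \<Rightarrow> ('s \<Rightarrow> 'x) \<times> ('r \<Rightarrow> 'y) \<Rightarrow> 'c \<Rightarrow> nat \<Rightarrow> 'y" where
  "corner_labels D C c i = snd C (ccw_reg D (pos D c i))"

lemma under_right_under_left:
  "under_right D ori c = (if incoming ori (pos D c 1) then 2 else 0)"
  "under_left D ori c = (if incoming ori (pos D c 1) then 0 else 2)"
  by (simp_all add: under_right_def under_left_def over_out_def)

lemma wf_diagramD:
  assumes "wf_diagram D"
  shows wf_diagram_pos_arc: "\<And>c i. c \<in> crs D \<Longrightarrow> i < 4 \<Longrightarrow> fst (pos D c i) \<in> arcs D"
    and wf_diagram_inj_pos: "inj_on (\<lambda>(c, i). pos D c i) (crs D \<times> {..<4})"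
    and wf_diagram_ends: "\<And>s. s \<in> arcs D \<Longrightarrow> ((s, False) \<in> ends D) = ((s, True) \<in> ends D)"
    and wf_diagram_ccw_reg:
      "\<And>c i. c \<in> crs D \<Longrightarrow> i < 4 \<Longrightarrow> ccw_reg D (pos D c i) = cw_reg D (pos D c (Suc i mod 4))"
  using assms unfolding wf_diagram_def by simp_all

lemma wf_diagram_cw_reg:
  assumes "wf_diagram D" "c \<in> crs D" "i < 4"
  shows "cw_reg D (pos D c i) = ccw_reg D (pos D c ((i + 3) mod 4))"
proof -
  have "Suc ((i + 3) mod 4) mod 4 = i" using assms(3) by (simp add: mod_Suc_eq)
  then show ?thesis using wf_diagram_ccw_reg[OF assms(1,2), of "(i + 3) mod 4"] by simp
qed

lemma oright_oleft_end:
  "oright D ori (fst e) = (if incoming ori e then ccw_reg D e else cw_reg D e)"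
  "oleft D ori (fst e) = (if incoming ori e then cw_reg D e else ccw_reg D e)"
  by (cases e; simp add: ccw_reg_def cw_reg_def incoming_def oright_def oleft_def)+

lemma region_labels_end_data:
  assumes "wf_diagram D" "c \<in> crs D" "i < 4"
  shows right_region_end_data: "right_region (end_dirs D ori c) (corner_labels D C c) i = snd C (oright D ori (fst (pos D c i)))"
    and left_region_end_data: "left_region (end_dirs D ori c) (corner_labels D C c) i = snd C (oleft D ori (fst (pos D c i)))"
  using assms wf_diagram_cw_reg[OF assms]
  by (simp_all add: right_region_def left_region_def end_dirs_def corner_labels_def oright_oleft_end)

lemma local_orientation_end_data:
  assumes "is_orientation D ori" "c \<in> crs D"
  shows "local_orientation (end_dirs D ori c)"
proof -
  have strands: "\<forall>i<2. incoming ori (pos D c i) \<noteq> incoming ori (pos D c (i + 2))"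
    using assms unfolding is_orientation_def by blast
  have "incoming ori (pos D c 0) \<noteq> incoming ori (pos D c 2)"
    using strands[rule_format, of 0] by (simp add: numeral_2_eq_2)
  moreover have "incoming ori (pos D c 1) \<noteq> incoming ori (pos D c 3)"
    using strands[rule_format, of 1] by (simp add: numeral_3_eq_3)
  ultimately show ?thesis by (simp add: local_orientation_def end_dirs_def)
qed

lemma local_crossing_rel_end_data:
  "local_crossing_rel q (end_dirs D ori c) (end_labels D C c) \<longleftrightarrow>
     fst C (fst (pos D c 1)) = fst C (fst (pos D c 3)) \<and>
     q (fst C (fst (pos D c (under_right D ori c)))) (fst C (fst (pos D c 1)))
       = fst C (fst (pos D c (under_left D ori c)))"
  by (auto simp: local_crossing_rel_def end_dirs_def end_labels_def under_right_under_left)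

lemma coloring_iff_local:
  "coloring q act D ori C \<longleftrightarrow>
     fst C \<in> extensional (arcs D) \<and> snd C \<in> extensional (regs D) \<and>
     (\<forall>s\<in>arcs D. act (snd C (oright D ori s)) (fst C s) = snd C (oleft D ori s)) \<and>
     (\<forall>c\<in>crs D. local_crossing_rel q (end_dirs D ori c) (end_labels D C c))"
  unfolding local_crossing_rel_end_data coloring_def Let_def ..

lemma local_region_rel_end_data:
  assumes "wf_diagram D" "coloring q act D ori C" "c \<in> crs D"
  shows "local_region_rel act (end_dirs D ori c) (corner_labels D C c) (end_labels D C c)"
  unfolding local_region_rel_def
proof (intro allI impI)
  fix i :: nat assume "i < 4"
  then show "left_region (end_dirs D ori c) (corner_labels D C c) i =
      act (right_region (end_dirs D ori c) (corner_labels D C c) i) (end_labels D C c i)"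
    using assms(2) wf_diagram_pos_arc[OF assms(1,3)] region_labels_end_data[OF assms(1,3), where ori = ori and C = C]
    by (simp add: coloring_iff_local end_labels_def)
qed

lemma theta_val_eq_sum_local_weight:
  assumes "wf_diagram D"
  shows "theta_val \<theta> D ori C =
    (\<Sum>c\<in>crs D. local_weight \<theta> (end_dirs D ori c) (corner_labels D C c) (end_labels D C c))"
  unfolding theta_val_def
proof (rule sum.cong)
  fix c assume "c \<in> crs D"
  then show "(let s1 = fst (pos D c (under_right D ori c));
        v = \<theta> (snd C (oright D ori s1)) (fst C s1) (fst C (fst (pos D c 1)))
      in if cr_sign D ori c then v else - v) =
    local_weight \<theta> (end_dirs D ori c) (corner_labels D C c) (end_labels D C c)"
    using right_region_end_data[OF assms \<open>c \<in> crs D\<close>, where ori = ori and C = C, of 0]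
      right_region_end_data[OF assms \<open>c \<in> crs D\<close>, where ori = ori and C = C, of 2]
    by (simp add: Let_def cr_sign_def under_right_under_left local_weight_def signed_def
        end_dirs_def end_labels_def)
qed simp

section \<open>Invariance under coboundaries\<close>

lemma sum_crossing_ends_antisym:
  fixes g :: "'s \<times> bool \<Rightarrow> 'a::ab_group_add"
  assumes W: "wf_diagram D" and antisym: "\<And>s. g (s, False) = - g (s, True)"
  shows "(\<Sum>c\<in>crs D. \<Sum>i<4. g (pos D c i)) = 0"
proof -
  have both_ends: "ends D = fst ` ends D \<times> (UNIV :: bool set)"
  proof (intro equalityI subsetI)
    fix e assume "e \<in> ends D"
    then show "e \<in> fst ` ends D \<times> (UNIV :: bool set)" by (cases e) force
  next
    fix e assume "e \<in> fst ` ends D \<times> (UNIV :: bool set)"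
    then obtain c i b where "c \<in> crs D" "i < 4" and e: "e = (fst (pos D c i), b)"
      unfolding ends_def by auto
    obtain s \<beta> where p: "pos D c i = (s, \<beta>)" by fastforce
    then have "s \<in> arcs D" "(s, \<beta>) \<in> ends D"
      using \<open>c \<in> crs D\<close> \<open>i < 4\<close> wf_diagram_pos_arc[OF W] unfolding ends_def by force+
    then have "(s, False) \<in> ends D" "(s, True) \<in> ends D"
      using wf_diagram_ends[OF W] by (cases \<beta>; auto)+
    then show "e \<in> ends D" unfolding e p by (cases b) auto
  qed
  have "(\<Sum>c\<in>crs D. \<Sum>i<4. g (pos D c i)) = (\<Sum>p\<in>crs D \<times> {..<4}. g ((\<lambda>(c, i). pos D c i) p))"
    by (simp add: sum.cartesian_product case_prod_beta)
  also have "\<dots> = (\<Sum>e\<in>ends D. g e)"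
    unfolding ends_def by (simp add: sum.reindex[OF wf_diagram_inj_pos[OF W]] o_def)
  also have "\<dots> = (\<Sum>s\<in>fst ` ends D. \<Sum>b\<in>UNIV. g (s, b))"
    by (subst both_ends) (simp add: sum.cartesian_product)
  also have "\<dots> = 0"
    by (simp add: UNIV_bool antisym)
  finally show ?thesis .
qed

lemma theta_val_delta1_eq_0:
  assumes W: "wf_diagram D" and O: "is_orientation D ori" and Col: "coloring q act D ori C"
  shows "theta_val (delta1 q act f) D ori C = 0"
proof -
  let ?g = "\<lambda>e. signed (incoming ori e) (f (snd C (oright D ori (fst e))) (fst C (fst e)))"
  have "theta_val (delta1 q act f) D ori C = (\<Sum>c\<in>crs D. \<Sum>i<4. ?g (pos D c i))"
  proof (unfold theta_val_eq_sum_local_weight[OF W], rule sum.cong)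
    fix c assume c: "c \<in> crs D"
    have cr: "local_crossing_rel q (end_dirs D ori c) (end_labels D C c)"
      using Col c by (simp add: coloring_iff_local)
    have "local_weight (delta1 q act f) (end_dirs D ori c) (corner_labels D C c) (end_labels D C c)
        = (\<Sum>i<4. signed (end_dirs D ori c i)
            (f (right_region (end_dirs D ori c) (corner_labels D C c) i) (end_labels D C c i)))"
      by (rule local_weight_delta1[OF local_orientation_end_data[OF O c] cr
            local_region_rel_end_data[OF W Col c]])
    also have "\<dots> = (\<Sum>i<4. ?g (pos D c i))"
      using right_region_end_data[OF W c, where ori = ori and C = C]
      by (intro sum.cong) (auto simp: end_dirs_def end_labels_def)
    finally show "local_weight (delta1 q act f) (end_dirs D ori c) (corner_labels D C c) (end_labels D C c)
        = (\<Sum>i<4. ?g (pos D c i))" .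
  qed simp
  also have "\<dots> = 0"
    by (rule sum_crossing_ends_antisym[OF W]) (auto simp: signed_def incoming_def)
  finally show ?thesis .
qed

lemma theta_val_diff:
  "theta_val \<theta> D ori C - theta_val \<theta>' D ori C = theta_val (\<lambda>y u v. \<theta> y u v - \<theta>' y u v) D ori C"
  unfolding theta_val_def Let_def sum_subtractf[symmetric] by (intro sum.cong) auto

lemma theta_val_cohomologous:
  assumes "wf_diagram D" "is_orientation D ori" "coloring q act D ori C" "Q_cohomologous q act \<theta> \<theta>'"
  shows "theta_val \<theta> D ori C = theta_val \<theta>' D ori C"
proof -
  obtain f where "\<forall>y u v. \<theta> y u v - \<theta>' y u v = delta1 q act f y u v"
    using assms(4) unfolding Q_cohomologous_def by blast
  then have f: "(\<lambda>y u v. \<theta> y u v - \<theta>' y u v) = delta1 q act f" by (intro ext) simp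
  have "theta_val \<theta> D ori C - theta_val \<theta>' D ori C = theta_val (delta1 q act f) D ori C"
    unfolding theta_val_diff f ..
  also have "\<dots> = 0" by (rule theta_val_delta1_eq_0[OF assms(1-3)])
  finally show ?thesis by (simp only: right_minus_eq)
qed

section \<open>Reversing orientations\<close>

definition reorient_coloring :: "('x \<Rightarrow> 'x) \<Rightarrow> ('s, 'r, 'c) udiagram \<Rightarrow> ('s \<Rightarrow> bool) \<Rightarrow> ('s \<Rightarrow> bool)
    \<Rightarrow> ('s \<Rightarrow> 'x) \<times> ('r \<Rightarrow> 'y) \<Rightarrow> ('s \<Rightarrow> 'x) \<times> ('r \<Rightarrow> 'y)" where
  "reorient_coloring \<rho> D o1 o2 C =
     ((\<lambda>s. if s \<in> arcs D \<and> o1 s \<noteq> o2 s then \<rho> (fst C s) else fst C s), snd C)"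

lemma reorient_coloring_involutive:
  "symmetric_quandle q \<rho> \<Longrightarrow> reorient_coloring \<rho> D o1 o2 (reorient_coloring \<rho> D o1 o2 C) = C"
  by (cases C) (auto simp: reorient_coloring_def symmetric_quandleD)

lemma reorient_coloring_commute: "reorient_coloring \<rho> D o2 o1 = reorient_coloring \<rho> D o1 o2"
  unfolding reorient_coloring_def by (intro ext) auto

lemma flipped_ends_reorient_coloring:
  assumes "wf_diagram D" "c \<in> crs D"
  shows "flipped_ends \<rho> (\<lambda>i. o1 (fst (pos D c i)) \<noteq> o2 (fst (pos D c i)))
     (end_dirs D o1 c) (end_labels D C c) (end_dirs D o2 c) (end_labels D (reorient_coloring \<rho> D o1 o2 C) c)"
  using wf_diagram_pos_arc[OF assms]
  by (auto simp: flipped_ends_def end_dirs_def end_labels_def reorient_coloring_def incoming_def)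

lemma reorient_flips_along_strands:
  assumes "is_orientation D o1" "is_orientation D o2" "c \<in> crs D"
  defines "fl \<equiv> \<lambda>i. o1 (fst (pos D c i)) \<noteq> o2 (fst (pos D c i))"
  shows "fl 0 = fl 2" and "fl 1 = fl 3"
  using local_orientation_end_data[OF assms(1,3)] local_orientation_end_data[OF assms(2,3)]
  by (auto simp: fl_def local_orientation_def end_dirs_def incoming_def)

lemma corner_labels_reorient_coloring:
  "corner_labels D (reorient_coloring \<rho> D o1 o2 C) c = corner_labels D C c"
  unfolding corner_labels_def reorient_coloring_def by simp

lemma coloring_reorient_coloring:
  assumes SQ: "symmetric_quandle q \<rho>" and XS: "xrho_set q \<rho> act" and W: "wf_diagram D"
    and O1: "is_orientation D o1" and O2: "is_orientation D o2" and Col: "coloring q act D o1 C"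
  shows "coloring q act D o2 (reorient_coloring \<rho> D o1 o2 C)"
  unfolding coloring_iff_local
proof (intro conjI ballI)
  let ?C' = "reorient_coloring \<rho> D o1 o2 C"
  show "fst ?C' \<in> extensional (arcs D)" "snd ?C' \<in> extensional (regs D)"
    using Col unfolding coloring_iff_local reorient_coloring_def extensional_def by auto
  fix s assume s: "s \<in> arcs D"
  have "snd C (oleft D o1 s) = act (snd C (oright D o1 s)) (fst C s)"
    using Col s unfolding coloring_iff_local by simp
  then show "act (snd ?C' (oright D o2 s)) (fst ?C' s) = snd ?C' (oleft D o2 s)"
    using s xrho_setD(2)[OF XS] by (auto simp: reorient_coloring_def oright_def oleft_def)
next
  fix c assume c: "c \<in> crs D"
  have "local_crossing_rel q (end_dirs D o1 c) (end_labels D C c)"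
    using Col c unfolding coloring_iff_local by blast
  then show "local_crossing_rel q (end_dirs D o2 c) (end_labels D (reorient_coloring \<rho> D o1 o2 C) c)"
    by (rule local_crossing_rel_flip[OF SQ _ flipped_ends_reorient_coloring[OF W c]
          reorient_flips_along_strands[OF O1 O2 c]])
qed

lemma theta_val_reorient_coloring:
  assumes SQ: "symmetric_quandle q \<rho>" and XS: "xrho_set q \<rho> act" and S: "sym_2cocycle q \<rho> act \<theta>"
    and W: "wf_diagram D" and O1: "is_orientation D o1" and O2: "is_orientation D o2"
    and Col: "coloring q act D o1 C"
  shows "theta_val \<theta> D o2 (reorient_coloring \<rho> D o1 o2 C) = theta_val \<theta> D o1 C"
proof -
  let ?C' = "reorient_coloring \<rho> D o1 o2 C"
  have "theta_val \<theta> D o2 ?C' =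
      (\<Sum>c\<in>crs D. local_weight \<theta> (end_dirs D o2 c) (corner_labels D ?C' c) (end_labels D ?C' c))"
    by (rule theta_val_eq_sum_local_weight[OF W])
  also have "\<dots> = (\<Sum>c\<in>crs D. local_weight \<theta> (end_dirs D o1 c) (corner_labels D C c) (end_labels D C c))"
  proof (rule sum.cong)
    fix c assume c: "c \<in> crs D"
    have "local_crossing_rel q (end_dirs D o1 c) (end_labels D C c)"
      using Col c unfolding coloring_iff_local by blast
    then show "local_weight \<theta> (end_dirs D o2 c) (corner_labels D ?C' c) (end_labels D ?C' c)
        = local_weight \<theta> (end_dirs D o1 c) (corner_labels D C c) (end_labels D C c)"
      unfolding corner_labels_reorient_coloring
      by (rule local_weight_flip[OF SQ XS S local_orientation_end_data[OF O1 c] _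
          local_region_rel_end_data[OF W Col c] flipped_ends_reorient_coloring[OF W c]
          reorient_flips_along_strands[OF O1 O2 c]])
  qed simp
  also have "\<dots> = theta_val \<theta> D o1 C"
    by (rule theta_val_eq_sum_local_weight[OF W, symmetric])
  finally show ?thesis .
qed

lemma reorient_coloring_Phi_fibre:
  assumes SQ: "symmetric_quandle q \<rho>" and XS: "xrho_set q \<rho> act"
    and S: "sym_2cocycle q \<rho> act \<theta>'" and H: "Q_cohomologous q act \<theta> \<theta>'"
    and W: "wf_diagram D" and O1: "is_orientation D o1" and O2: "is_orientation D o2"
  shows "reorient_coloring \<rho> D o1 o2 ` Phi_fibre q act \<theta> D o1 a \<subseteq> Phi_fibre q act \<theta> D o2 a"
proof (rule image_subsetI)
  fix C assume "C \<in> Phi_fibre q act \<theta> D o1 a"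
  then have Col: "coloring q act D o1 C" and val: "theta_val \<theta> D o1 C = a"
    unfolding Phi_fibre_def by auto
  let ?C' = "reorient_coloring \<rho> D o1 o2 C"
  have Col': "coloring q act D o2 ?C'" by (rule coloring_reorient_coloring[OF SQ XS W O1 O2 Col])
  have "theta_val \<theta> D o2 ?C' = theta_val \<theta>' D o2 ?C'"
    by (rule theta_val_cohomologous[OF W O2 Col' H])
  also have "\<dots> = theta_val \<theta>' D o1 C"
    by (rule theta_val_reorient_coloring[OF SQ XS S W O1 O2 Col])
  also have "\<dots> = a"
    using theta_val_cohomologous[OF W O1 Col H] val by simp
  finally show "?C' \<in> Phi_fibre q act \<theta> D o2 a"
    using Col' unfolding Phi_fibre_def by simp
qed

theorem corollary6p8:
  fixes q :: "'x \<Rightarrow> 'x \<Rightarrow> 'x" and \<rho> :: "'x \<Rightarrow> 'x" and act :: "'y \<Rightarrow> 'x \<Rightarrow> 'y"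
    and \<theta> :: "'y \<Rightarrow> 'x \<Rightarrow> 'x \<Rightarrow> 'a::ab_group_add"
    and D :: "('s, 'r, 'c) udiagram" and o1 o2 :: "'s \<Rightarrow> bool"
  assumes "symmetric_quandle q \<rho>"
    and "xrho_set q \<rho> act"
    and "Q_2cocycle q act \<theta>"
    and "\<exists>\<theta>'. sym_2cocycle q \<rho> act \<theta>' \<and> Q_cohomologous q act \<theta> \<theta>'"
    and "wf_diagram D"
    and "is_orientation D o1"
    and "is_orientation D o2"
  shows "Phi_eq q act \<theta> D o1 o2"
  unfolding Phi_eq_def eqpoll_def
proof
  fix a
  obtain \<theta>' where S: "sym_2cocycle q \<rho> act \<theta>'" and H: "Q_cohomologous q act \<theta> \<theta>'"
    using assms(4) by blast
  let ?F = "reorient_coloring \<rho> D o1 o2"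
  have "bij_betw ?F (Phi_fibre q act \<theta> D o1 a) (Phi_fibre q act \<theta> D o2 a)"
  proof (rule bij_betw_byWitness[where f' = ?F])
    show "?F ` Phi_fibre q act \<theta> D o1 a \<subseteq> Phi_fibre q act \<theta> D o2 a"
      by (rule reorient_coloring_Phi_fibre[OF assms(1,2) S H assms(5-7)])
    show "?F ` Phi_fibre q act \<theta> D o2 a \<subseteq> Phi_fibre q act \<theta> D o1 a"
      using reorient_coloring_Phi_fibre[OF assms(1,2) S H assms(5,7,6)]
      unfolding reorient_coloring_commute[of \<rho> D o2 o1] .
  qed (simp_all add: reorient_coloring_involutive[OF assms(1)])
  then show "\<exists>g. bij_betw g (Phi_fibre q act \<theta> D o1 a) (Phi_fibre q act \<theta> D o2 a)" by blast
qed

end
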